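(* Let $n\ge2$ be an integer and $\lambda>0$. Consider the system of ODEs in $(\omega,x,y)\in\mathbb{R}^3$ $$\frac{d\omega}{dt}=x\omega,\qquad \frac{dx}{dt}=X(\omega,x,y):=x^2-xy+n-1-\lambda\omega^2,\qquad \frac{dy}{dt}=xy-nx^2-\lambda\omega^2,$$ restricted to trajectories lying in the half-space $\{\omega>0\}$. Then the regions $$\{x\ge 1,\ X(\omega,x,y)\ge 0\},\quad \{x\le -1,\ X(\omega,x,y)\le 0\},\quad \{y\le 0\}$$ are preserved by the system for increasing $t$, and the regions $$\{x\ge 1,\ X(\omega,x,y)\le 0\},\quad \{x\le -1,\ X(\omega,x,y)\ge 0\},\quad \{y\ge 0\}$$ are preserved by the system for decreasing $t$.
   Context: A set $V\subset\mathbb{R}^3$ is preserved for increasing $t$ if for every solution $\gamma(t)=(\omega(t),x(t),y(t))$ of the system (with $\omega>0$), $\gamma(t_0)\in V$ implies $\gamma(t)\in V$ for all $t>t_0$ for which the solution is defined; preserved for decreasing $t$ is defined analogously with $t<t_0$. Note that along a solution, $X(\omega(t),x(t),y(t))=\frac{dx}{dt}(t)$. *)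

theory Defs
  imports "HOL-Analysis.Analysis"
begin

definition Xf :: "nat \<Rightarrow> real \<Rightarrow> real \<Rightarrow> real \<Rightarrow> real \<Rightarrow> real" where
  "Xf n lam w x y = x^2 - x * y + real n - 1 - lam * w^2"

definition is_solution ::
  "nat \<Rightarrow> real \<Rightarrow> real set \<Rightarrow> (real \<Rightarrow> real) \<Rightarrow> (real \<Rightarrow> real) \<Rightarrow> (real \<Rightarrow> real) \<Rightarrow> bool" where
  "is_solution n lam I w x y \<longleftrightarrow> open I \<and> is_interval I \<and>
     (\<forall>t\<in>I. w t > 0 \<and>
        (w has_real_derivative (x t * w t)) (at t) \<and>
        (x has_real_derivative (Xf n lam (w t) (x t) (y t))) (at t) \<and>
        (y has_real_derivative (x t * y t - real n * (x t)^2 - lam * (w t)^2)) (at t))"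

definition preserved_inc :: "nat \<Rightarrow> real \<Rightarrow> (real \<times> real \<times> real) set \<Rightarrow> bool" where
  "preserved_inc n lam V \<longleftrightarrow>
     (\<forall>I w x y t0 t. is_solution n lam I w x y \<and> t0 \<in> I \<and> t \<in> I \<and> t0 < t \<and>
        (w t0, x t0, y t0) \<in> V \<longrightarrow> (w t, x t, y t) \<in> V)"

definition preserved_dec :: "nat \<Rightarrow> real \<Rightarrow> (real \<times> real \<times> real) set \<Rightarrow> bool" where
  "preserved_dec n lam V \<longleftrightarrow>
     (\<forall>I w x y t0 t. is_solution n lam I w x y \<and> t0 \<in> I \<and> t \<in> I \<and> t < t0 \<and>
        (w t0, x t0, y t0) \<in> V \<longrightarrow> (w t, x t, y t) \<in> V)"

end

theory Submission
  imports Defs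
begin

text \<open>The pairs \<open>(x - 1, X)\<close> and \<open>(-1 - x, -X)\<close> satisfy along solutions a linear cooperative system
\<open>u' = v\<close>, \<open>v' = (3x - y) v + (n - 1) x (x \<plusminus> 1) u\<close>, whose coupling coefficient is nonnegative as long
as \<open>u \<ge> 0\<close>; and \<open>-y\<close> satisfies \<open>(-y)' \<ge> x (-y)\<close>. A comparison principle for such differential
inequalities (proved by an exponential weight and a minimum argument) shows that the nonnegative
quadrant is forward invariant, giving the three forward statements. The map
\<open>(t, \<omega>, x, y) \<mapsto> (-t, \<omega>, -x, -y)\<close> sends solutions to solutions and fixes \<open>X\<close>, so it turns
the forward statements into the backward ones.\<close>

lemma linear_form_pos_at_negative_min:
  fixes u v a b :: real
  assumes "u < 0" "u \<le> v" "a + \<bar>b\<bar> < 0" "0 \<le> v \<longrightarrow> 0 \<le> b"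
  shows "0 < a * u + b * v"
proof -
  have "\<bar>b\<bar> * u \<le> b * v"
  proof (cases "0 \<le> v")
    case True
    then show ?thesis using assms by (smt (verit) abs_ge_zero mult_nonneg_nonneg mult_nonneg_nonpos)
  next
    case False
    have "\<bar>b\<bar> * u \<le> \<bar>b\<bar> * v" using assms by (intro mult_left_mono) auto
    also have "\<dots> \<le> b * v" using False by (intro mult_right_mono_neg) auto
    finally show ?thesis .
  qed
  moreover have "0 < (a + \<bar>b\<bar>) * u" using assms by (simp add: mult_neg_neg)
  ultimately show ?thesis by (simp add: algebra_simps)
qed

lemma DERIV_nonpos_at_left_min:
  fixes f :: "real \<Rightarrow> real"
  assumes "(f has_real_derivative l) (at r)" "a < r" "\<And>s. s \<in> {a..r} \<Longrightarrow> f r \<le> f s"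
  shows "l \<le> 0"
proof (rule ccontr)
  assume "\<not> l \<le> 0"
  then obtain d where "d > 0" and d: "\<And>h. 0 < h \<Longrightarrow> h < d \<Longrightarrow> f (r - h) < f r"
    using DERIV_pos_inc_left[OF assms(1)] by auto
  define h where "h = min (d / 2) (r - a)"
  have "0 < h" "h < d" "r - h \<in> {a..r}" using \<open>d > 0\<close> \<open>a < r\<close> by (auto simp: h_def)
  then show False using d assms(3) by fastforce
qed

lemma cooperative_diff_ineq_nonneg_dissipative:
  fixes u v u' v' a b c d :: "real \<Rightarrow> real"
  assumes "t0 \<le> t1"
    and u: "\<And>t. t \<in> {t0..t1} \<Longrightarrow> (u has_real_derivative u' t) (at t)"
    and v: "\<And>t. t \<in> {t0..t1} \<Longrightarrow> (v has_real_derivative v' t) (at t)"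
    and u': "\<And>t. t \<in> {t0..t1} \<Longrightarrow> a t * u t + b t * v t \<le> u' t"
    and v': "\<And>t. t \<in> {t0..t1} \<Longrightarrow> d t * v t + c t * u t \<le> v' t"
    and ab: "\<And>t. t \<in> {t0..t1} \<Longrightarrow> a t + \<bar>b t\<bar> < 0"
    and dc: "\<And>t. t \<in> {t0..t1} \<Longrightarrow> d t + \<bar>c t\<bar> < 0"
    and b: "\<And>t. t \<in> {t0..t1} \<Longrightarrow> 0 \<le> v t \<Longrightarrow> 0 \<le> b t"
    and c: "\<And>t. t \<in> {t0..t1} \<Longrightarrow> 0 \<le> u t \<Longrightarrow> 0 \<le> c t"
    and "0 \<le> u t0" "0 \<le> v t0"
  shows "\<forall>t\<in>{t0..t1}. 0 \<le> u t \<and> 0 \<le> v t"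
proof -
  have "continuous_on {t0..t1} u" "continuous_on {t0..t1} v"
    using DERIV_isCont[OF u] DERIV_isCont[OF v] by (auto intro!: continuous_at_imp_continuous_on)
  then have "continuous_on {t0..t1} (\<lambda>t. min (u t) (v t))"
    by (intro continuous_intros)
  moreover have "{t0..t1} \<noteq> {}" using \<open>t0 \<le> t1\<close> by simp
  ultimately obtain r where r: "r \<in> {t0..t1}"
    and r_min: "\<And>t. t \<in> {t0..t1} \<Longrightarrow> min (u r) (v r) \<le> min (u t) (v t)"
    using continuous_attains_inf[OF compact_Icc] by blast
  have "0 \<le> min (u r) (v r)"
  proof (rule ccontr)
    assume neg: "\<not> 0 \<le> min (u r) (v r)"
    then have "t0 < r" using r \<open>0 \<le> u t0\<close> \<open>0 \<le> v t0\<close> by (cases "r = t0") auto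
    have left: "{t0..r} \<subseteq> {t0..t1}" using r by auto
    consider "u r \<le> v r" | "v r \<le> u r" by linarith
    then show False
    proof cases
      case 1
      have "u' r \<le> 0"
        using DERIV_nonpos_at_left_min[OF u[OF r] \<open>t0 < r\<close>] r_min left 1
        by (smt (verit) subset_iff)
      moreover have "0 < a r * u r + b r * v r"
        using linear_form_pos_at_negative_min[of "u r" "v r" "a r" "b r"] 1 neg ab[OF r] b[OF r]
        by linarith
      ultimately show False using u'[OF r] by linarith
    next
      case 2
      have "v' r \<le> 0"
        using DERIV_nonpos_at_left_min[OF v[OF r] \<open>t0 < r\<close>] r_min left 2
        by (smt (verit) subset_iff)
      moreover have "0 < d r * v r + c r * u r"
        using linear_form_pos_at_negative_min[of "v r" "u r" "d r" "c r"] 2 neg dc[OF r] c[OF r]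
        by linarith
      ultimately show False using v'[OF r] by linarith
    qed
  qed
  show ?thesis
  proof
    fix t assume "t \<in> {t0..t1}"
    then have "0 \<le> min (u t) (v t)"
      using r_min \<open>0 \<le> min (u r) (v r)\<close> by (meson order_trans)
    then show "0 \<le> u t \<and> 0 \<le> v t" by simp
  qed
qed

lemma cooperative_diff_ineq_nonneg:
  fixes u v u' v' a b c d :: "real \<Rightarrow> real"
  assumes "t0 \<le> t1"
    and u: "\<And>t. t \<in> {t0..t1} \<Longrightarrow> (u has_real_derivative u' t) (at t)"
    and v: "\<And>t. t \<in> {t0..t1} \<Longrightarrow> (v has_real_derivative v' t) (at t)"
    and u': "\<And>t. t \<in> {t0..t1} \<Longrightarrow> a t * u t + b t * v t \<le> u' t"
    and v': "\<And>t. t \<in> {t0..t1} \<Longrightarrow> d t * v t + c t * u t \<le> v' t"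
    and "continuous_on {t0..t1} a" "continuous_on {t0..t1} b"
    and "continuous_on {t0..t1} c" "continuous_on {t0..t1} d"
    and b: "\<And>t. t \<in> {t0..t1} \<Longrightarrow> 0 \<le> v t \<Longrightarrow> 0 \<le> b t"
    and c: "\<And>t. t \<in> {t0..t1} \<Longrightarrow> 0 \<le> u t \<Longrightarrow> 0 \<le> c t"
    and u0: "0 \<le> u t0" and v0: "0 \<le> v t0"
  shows "\<forall>t\<in>{t0..t1}. 0 \<le> u t \<and> 0 \<le> v t"
proof -
  define f where "f t = max (a t + \<bar>b t\<bar>) (d t + \<bar>c t\<bar>)" for t
  have "continuous_on {t0..t1} f"
    unfolding f_def using assms by (intro continuous_intros)
  moreover have "{t0..t1} \<noteq> {}" using \<open>t0 \<le> t1\<close> by simp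
  ultimately obtain s where s: "\<And>t. t \<in> {t0..t1} \<Longrightarrow> f t \<le> f s"
    using continuous_attains_sup[OF compact_Icc] by blast
  define L where "L = f s + 1"
  have ab: "(a t - L) + \<bar>b t\<bar> < 0" and dc: "(d t - L) + \<bar>c t\<bar> < 0" if "t \<in> {t0..t1}" for t
    using s[OF that] unfolding f_def L_def by auto
  text \<open>With the weight \<open>E t = exp (-L t)\<close> the diagonal coefficients drop by \<open>L\<close>,
    which makes the system dissipative.\<close>
  define E where "E t = exp (- L * t)" for t
  have E_pos: "0 < E t" for t by (simp add: E_def)
  have Eu: "((\<lambda>t. E t * u t) has_real_derivative E t * (u' t - L * u t)) (at t)"
    and Ev: "((\<lambda>t. E t * v t) has_real_derivative E t * (v' t - L * v t)) (at t)"
    if "t \<in> {t0..t1}" for t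
    using u[OF that] v[OF that] unfolding E_def
    by (auto intro!: derivative_eq_intros simp: algebra_simps)
  have Eu': "(a t - L) * (E t * u t) + b t * (E t * v t) \<le> E t * (u' t - L * u t)"
    and Ev': "(d t - L) * (E t * v t) + c t * (E t * u t) \<le> E t * (v' t - L * v t)"
    if "t \<in> {t0..t1}" for t
    using mult_left_mono[OF u'[OF that], of "E t"] mult_left_mono[OF v'[OF that], of "E t"] E_pos[of t]
    by (simp_all add: algebra_simps)
  have E_scale: "0 \<le> E t * z \<longleftrightarrow> 0 \<le> z" for t z
    using E_pos[of t] by (simp add: zero_le_mult_iff)
  have Eb: "0 \<le> b t" if "t \<in> {t0..t1}" "0 \<le> E t * v t" for t
    using that b by (simp add: E_scale)
  have Ec: "0 \<le> c t" if "t \<in> {t0..t1}" "0 \<le> E t * u t" for t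
    using that c by (simp add: E_scale)
  have "0 \<le> E t0 * u t0" "0 \<le> E t0 * v t0"
    using u0 v0 by (simp_all add: E_scale)
  then have "\<forall>t\<in>{t0..t1}. 0 \<le> E t * u t \<and> 0 \<le> E t * v t"
    using cooperative_diff_ineq_nonneg_dissipative[where u = "\<lambda>t. E t * u t" and v = "\<lambda>t. E t * v t"
        and u' = "\<lambda>t. E t * (u' t - L * u t)" and v' = "\<lambda>t. E t * (v' t - L * v t)"
        and a = "\<lambda>t. a t - L" and b = b and c = c and d = "\<lambda>t. d t - L",
        OF \<open>t0 \<le> t1\<close> Eu Ev Eu' Ev' ab dc Eb Ec]
    by blast
  then show ?thesis by (simp add: E_scale)
qed

lemma linear_diff_ineq_nonneg:
  fixes u u' a :: "real \<Rightarrow> real"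
  assumes "t0 \<le> t1"
    and "\<And>t. t \<in> {t0..t1} \<Longrightarrow> (u has_real_derivative u' t) (at t)"
    and "\<And>t. t \<in> {t0..t1} \<Longrightarrow> a t * u t \<le> u' t"
    and "continuous_on {t0..t1} a" "0 \<le> u t0"
  shows "\<forall>t\<in>{t0..t1}. 0 \<le> u t"
  using cooperative_diff_ineq_nonneg[where u = u and v = u and u' = u' and v' = u'
      and a = a and b = "\<lambda>_. 0" and c = "\<lambda>_. 0" and d = a] assms
  by auto

lemma Xf_uminus [simp]: "Xf n lam w (- x) (- y) = Xf n lam w x y"
  unfolding Xf_def by simp

lemma is_solutionD:
  assumes "is_solution n lam I w x y"
  shows "open I" "is_interval I"
    and "t \<in> I \<Longrightarrow> 0 < w t"
    and "t \<in> I \<Longrightarrow> (w has_real_derivative x t * w t) (at t)"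
    and "t \<in> I \<Longrightarrow> (x has_real_derivative Xf n lam (w t) (x t) (y t)) (at t)"
    and "t \<in> I \<Longrightarrow> (y has_real_derivative x t * y t - real n * (x t)^2 - lam * (w t)^2) (at t)"
  using assms unfolding is_solution_def by simp_all

lemma is_solution_continuous_on:
  assumes "is_solution n lam I w x y"
  shows "continuous_on I x" "continuous_on I y"
  using DERIV_isCont[OF is_solutionD(5)[OF assms]] DERIV_isCont[OF is_solutionD(6)[OF assms]]
  by (auto intro!: continuous_at_imp_continuous_on)

lemma has_real_derivative_Xf_solution:
  assumes "is_solution n lam I w x y" "t \<in> I"
  shows "((\<lambda>t. Xf n lam (w t) (x t) (y t)) has_real_derivative
      (3 * x t - y t) * Xf n lam (w t) (x t) (y t) + (real n - 1) * x t * ((x t)^2 - 1)) (at t)"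
  unfolding Xf_def
  by (rule derivative_eq_intros is_solutionD(4-6)[OF assms] refl)+
    (simp add: Xf_def power2_eq_square algebra_simps)

lemma is_solution_reverse:
  assumes sol: "is_solution n lam I w x y"
  shows "is_solution n lam (uminus ` I) (\<lambda>t. w (- t)) (\<lambda>t. - x (- t)) (\<lambda>t. - y (- t))"
  unfolding is_solution_def
proof (intro conjI ballI)
  show "open (uminus ` I)" using open_negations[OF is_solutionD(1)[OF sol]] .
  show "is_interval (uminus ` I)" using is_solutionD(2)[OF sol] by simp
  fix t assume "t \<in> uminus ` I"
  then have t: "- t \<in> I" by force
  show "0 < w (- t)" using is_solutionD(3)[OF sol t] .
  show "((\<lambda>t. w (- t)) has_real_derivative - x (- t) * w (- t)) (at t)"
    using is_solutionD(4)[OF sol t, unfolded DERIV_mirror] by simp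
  show "((\<lambda>t. - x (- t)) has_real_derivative Xf n lam (w (- t)) (- x (- t)) (- y (- t))) (at t)"
    using DERIV_minus[OF is_solutionD(5)[OF sol t, unfolded DERIV_mirror]]
    by (simp only: minus_minus Xf_uminus)
  show "((\<lambda>t. - y (- t)) has_real_derivative
      - x (- t) * - y (- t) - real n * (- x (- t))^2 - lam * (w (- t))^2) (at t)"
    using DERIV_minus[OF is_solutionD(6)[OF sol t, unfolded DERIV_mirror]]
    by (simp add: power2_eq_square)
qed

lemma preserved_incI:
  assumes "\<And>I w x y t0 t1. is_solution n lam I w x y \<Longrightarrow> t0 \<le> t1 \<Longrightarrow> {t0..t1} \<subseteq> I \<Longrightarrow>
      (w t0, x t0, y t0) \<in> V \<Longrightarrow> (w t1, x t1, y t1) \<in> V"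
  shows "preserved_inc n lam V"
  unfolding preserved_inc_def
proof (intro allI impI, elim conjE)
  fix I w x y t0 t
  assume sol: "is_solution n lam I w x y" and "t0 \<in> I" "t \<in> I" "t0 < t"
    and start: "(w t0, x t0, y t0) \<in> V"
  have "{t0..t} \<subseteq> I"
    using mem_is_interval_1_I[OF is_solutionD(2)[OF sol] \<open>t0 \<in> I\<close> \<open>t \<in> I\<close>] by auto
  then show "(w t, x t, y t) \<in> V"
    by (rule assms[OF sol less_imp_le[OF \<open>t0 < t\<close>] _ start])
qed

lemma preserved_inc_signed_x_X:
  fixes \<sigma> :: real
  assumes "1 \<le> n" "\<bar>\<sigma>\<bar> = 1"
  shows "preserved_inc n lam {(w, x, y). 1 \<le> \<sigma> * x \<and> 0 \<le> \<sigma> * Xf n lam w x y}"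
proof (rule preserved_incI)
  fix I w x y t0 t1
  assume sol: "is_solution n lam I w x y" and "t0 \<le> t1" and J: "{t0..t1} \<subseteq> I"
    and "(w t0, x t0, y t0) \<in> {(w, x, y). 1 \<le> \<sigma> * x \<and> 0 \<le> \<sigma> * Xf n lam w x y}"
  define X where "X t = Xf n lam (w t) (x t) (y t)" for t
  have start: "1 \<le> \<sigma> * x t0" "0 \<le> \<sigma> * X t0"
    using \<open>(w t0, x t0, y t0) \<in> _\<close> unfolding X_def by auto
  have \<sigma>_sq: "\<sigma> * \<sigma> = 1" using abs_mult_self_eq[of \<sigma>] assms(2) by simp
  define c where "c t = (real n - 1) * (\<sigma> * x t) * (\<sigma> * x t + 1)" for t
  have du: "((\<lambda>t. \<sigma> * x t - 1) has_real_derivative \<sigma> * X t) (at t)"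
    if "t \<in> {t0..t1}" for t
    using is_solutionD(5)[OF sol] J that unfolding X_def by (auto intro!: derivative_eq_intros)
  have dv: "((\<lambda>t. \<sigma> * X t) has_real_derivative
      \<sigma> * ((3 * x t - y t) * X t + (real n - 1) * x t * ((x t)^2 - 1))) (at t)"
    if "t \<in> {t0..t1}" for t
    using has_real_derivative_Xf_solution[OF sol] J that unfolding X_def
    by (auto intro!: derivative_eq_intros)
  text \<open>Since \<open>\<sigma>\<^sup>2 = 1\<close>, \<open>x\<^sup>2 - 1 = (\<sigma> x - 1) (\<sigma> x + 1)\<close>.\<close>
  have dv_eq: "(3 * x t - y t) * (\<sigma> * X t) + c t * (\<sigma> * x t - 1)
      = \<sigma> * ((3 * x t - y t) * X t + (real n - 1) * x t * ((x t)^2 - 1))" for t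
    using \<sigma>_sq unfolding c_def by algebra
  have c_nonneg: "0 \<le> c t" if "0 \<le> \<sigma> * x t - 1" for t
    using that assms(1) unfolding c_def by simp
  have x: "continuous_on {t0..t1} x" and y: "continuous_on {t0..t1} y"
    using is_solution_continuous_on[OF sol] J by (auto intro: continuous_on_subset)
  have c: "continuous_on {t0..t1} c" and d: "continuous_on {t0..t1} (\<lambda>t. 3 * x t - y t)"
    unfolding c_def by (intro continuous_intros x y)+
  have "\<forall>t\<in>{t0..t1}. 0 \<le> \<sigma> * x t - 1 \<and> 0 \<le> \<sigma> * X t"
    by (rule cooperative_diff_ineq_nonneg[where u' = "\<lambda>t. \<sigma> * X t"
          and v' = "\<lambda>t. \<sigma> * ((3 * x t - y t) * X t + (real n - 1) * x t * ((x t)^2 - 1))" and a = "\<lambda>_. 0"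
          and b = "\<lambda>_. 1" and c = c and d = "\<lambda>t. 3 * x t - y t"])
      (simp_all add: \<open>t0 \<le> t1\<close> du dv dv_eq c d c_nonneg start)
  then show "(w t1, x t1, y t1) \<in> {(w, x, y). 1 \<le> \<sigma> * x \<and> 0 \<le> \<sigma> * Xf n lam w x y}"
    using \<open>t0 \<le> t1\<close> unfolding X_def by auto
qed

lemma preserved_inc_y_nonpos:
  assumes "0 \<le> lam"
  shows "preserved_inc n lam {(w, x, y). y \<le> 0}"
proof (rule preserved_incI)
  fix I w x y t0 t1
  assume sol: "is_solution n lam I w x y" and "t0 \<le> t1" and J: "{t0..t1} \<subseteq> I"
    and "(w t0, x t0, y t0) \<in> {(w, x, y). y \<le> 0}"
  then have start: "0 \<le> - y t0" by simp
  have du: "((\<lambda>t. - y t) has_real_derivative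
      - (x t * y t - real n * (x t)^2 - lam * (w t)^2)) (at t)" if "t \<in> {t0..t1}" for t
    using is_solutionD(6)[OF sol subsetD[OF J that]] by (rule DERIV_minus)
  have "x t * - y t \<le> - (x t * y t - real n * (x t)^2 - lam * (w t)^2)" for t
    using assms by simp
  moreover have "continuous_on {t0..t1} x"
    using is_solution_continuous_on[OF sol] J by (auto intro: continuous_on_subset)
  ultimately have "\<forall>t\<in>{t0..t1}. 0 \<le> - y t"
    using linear_diff_ineq_nonneg[OF \<open>t0 \<le> t1\<close> du] start by blast
  then show "(w t1, x t1, y t1) \<in> {(w, x, y). y \<le> 0}"
    using \<open>t0 \<le> t1\<close> by auto
qed

lemma preserved_dec_reflect:
  assumes "preserved_inc n lam V"
  shows "preserved_dec n lam ((\<lambda>(w, x, y). (w, - x, - y)) -` V)"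
  unfolding preserved_dec_def
proof (intro allI impI, elim conjE)
  fix I w x y t0 t
  assume sol: "is_solution n lam I w x y" and "t0 \<in> I" "t \<in> I" "t < t0"
    and "(w t0, x t0, y t0) \<in> (\<lambda>(w, x, y). (w, - x, - y)) -` V"
  then have "- t0 \<in> uminus ` I" "- t \<in> uminus ` I" "- t0 < - t"
    and "(w (- (- t0)), - x (- (- t0)), - y (- (- t0))) \<in> V" by auto
  then have "(w (- (- t)), - x (- (- t)), - y (- (- t))) \<in> V"
    using assms[unfolded preserved_inc_def, rule_format, OF conjI[OF is_solution_reverse[OF sol]]]
    by blast
  then show "(w t, x t, y t) \<in> (\<lambda>(w, x, y). (w, - x, - y)) -` V" by simp
qed

theorem lemma3p2:
  fixes n :: nat and lam :: real
  assumes "n \<ge> 2" and "lam > 0"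
  shows "preserved_inc n lam {(w, x, y). x \<ge> 1 \<and> Xf n lam w x y \<ge> 0} \<and>
    preserved_inc n lam {(w, x, y). x \<le> -1 \<and> Xf n lam w x y \<le> 0} \<and>
    preserved_inc n lam {(w, x, y). y \<le> 0} \<and>
    preserved_dec n lam {(w, x, y). x \<ge> 1 \<and> Xf n lam w x y \<le> 0} \<and>
    preserved_dec n lam {(w, x, y). x \<le> -1 \<and> Xf n lam w x y \<ge> 0} \<and>
    preserved_dec n lam {(w, x, y). y \<ge> 0}"
proof -
  have "1 \<le> n" using assms(1) by simp
  have pos: "preserved_inc n lam {(w, x, y). x \<ge> 1 \<and> Xf n lam w x y \<ge> 0}"
    using preserved_inc_signed_x_X[OF \<open>1 \<le> n\<close>, of 1] by simp
  have neg: "preserved_inc n lam {(w, x, y). x \<le> -1 \<and> Xf n lam w x y \<le> 0}"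
    using preserved_inc_signed_x_X[OF \<open>1 \<le> n\<close>, of "-1"] by (simp add: le_minus_iff)
  have y: "preserved_inc n lam {(w, x, y). y \<le> 0}"
    using preserved_inc_y_nonpos assms(2) by simp
  have flip_neg: "(\<lambda>(w, x, y). (w, - x, - y)) -` {(w, x, y). x \<le> -1 \<and> Xf n lam w x y \<le> 0}
      = {(w, x, y). x \<ge> 1 \<and> Xf n lam w x y \<le> 0}"
    and flip_pos: "(\<lambda>(w, x, y). (w, - x, - y)) -` {(w, x, y). x \<ge> 1 \<and> Xf n lam w x y \<ge> 0}
      = {(w, x, y). x \<le> -1 \<and> Xf n lam w x y \<ge> 0}"
    and flip_y: "(\<lambda>(w, x, y). (w, - x, - y)) -` {(w, x, y). y \<le> 0} = {(w, x, y). y \<ge> (0::real)}"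
    by auto
  show ?thesis
    using pos neg y preserved_dec_reflect[OF neg, unfolded flip_neg]
      preserved_dec_reflect[OF pos, unfolded flip_pos] preserved_dec_reflect[OF y, unfolded flip_y]
    by (intro conjI)
qed

end
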